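(* Let $\mathfrak g=\mathbb R f_1\ltimes_M\mathfrak u$ be a real almost abelian Lie algebra, where $\mathfrak u$ is an abelian ideal of codimension one and $M=\operatorname{ad}_{f_1}|_{\mathfrak u}$, endowed with an LCS structure $(\omega,\theta)$. If $M$ is invertible, then the LCS structure is of the second kind.
   Context: An LCS structure on $\mathfrak g$ is a pair $(\omega,\theta)$ with $\omega\in\Lambda^2\mathfrak g^*$ non-degenerate and $\theta\in\mathfrak g^*$ closed and nonzero, such that $d\omega=\theta\wedge\omega$. Let $\mathfrak g_\omega=\{x\in\mathfrak g:\ \omega([x,y],z)+\omega(y,[x,z])=0\ \text{for all }y,z\in\mathfrak g\}$. The LCS structure is of the first kind if $\theta|_{\mathfrak g_\omega}$ is surjective onto $\mathbb R$, and of the second kind if $\theta|_{\mathfrak g_\omega}\equiv0$. *)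

theory Defs
  imports "HOL-Analysis.Analysis"
begin

text \<open>The almost abelian Lie algebra g = R f1 \<ltimes>_M u, modelled on real \<times> 'u,
  where f1 = (1,0), u = {0} \<times> 'u (abelian ideal) and ad_{f1}|_u = M.\<close>
definition aa_bracket :: "('u::real_vector \<Rightarrow> 'u) \<Rightarrow> real \<times> 'u \<Rightarrow> real \<times> 'u \<Rightarrow> real \<times> 'u" where
  "aa_bracket M p q = (0, fst p *\<^sub>R M (snd q) - fst q *\<^sub>R M (snd p))"

text \<open>Exterior derivative with the Chevalley--Eilenberg convention:
  (d\<omega>)(x,y,z) = -\<omega>([x,y],z) - \<omega>([y,z],x) - \<omega>([z,x],y),
  (\<theta>\<and>\<omega>)(x,y,z) = \<theta>(x)\<omega>(y,z) + \<theta>(y)\<omega>(z,x) + \<theta>(z)\<omega>(x,y),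
  d\<theta>(x,y) = -\<theta>([x,y]).\<close>
definition lcs_structure ::
  "('g::real_vector \<Rightarrow> 'g \<Rightarrow> 'g) \<Rightarrow> ('g \<Rightarrow> 'g \<Rightarrow> real) \<Rightarrow> ('g \<Rightarrow> real) \<Rightarrow> bool" where
  "lcs_structure br \<omega> \<theta> \<longleftrightarrow>
     bilinear \<omega> \<and> (\<forall>x. \<omega> x x = 0) \<and> (\<forall>x. (\<forall>y. \<omega> x y = 0) \<longrightarrow> x = 0) \<and>
     linear \<theta> \<and> (\<forall>x y. \<theta> (br x y) = 0) \<and> \<theta> \<noteq> (\<lambda>_. 0) \<and>
     (\<forall>x y z. - \<omega> (br x y) z - \<omega> (br y z) x - \<omega> (br z x) y
               = \<theta> x * \<omega> y z + \<theta> y * \<omega> z x + \<theta> z * \<omega> x y)"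

definition g_omega :: "('g \<Rightarrow> 'g \<Rightarrow> 'g) \<Rightarrow> ('g \<Rightarrow> 'g \<Rightarrow> real) \<Rightarrow> 'g set" where
  "g_omega br \<omega> = {x. \<forall>y z. \<omega> (br x y) z + \<omega> y (br x z) = 0}"

definition lcs_first_kind :: "('g \<Rightarrow> 'g \<Rightarrow> 'g) \<Rightarrow> ('g \<Rightarrow> 'g \<Rightarrow> real) \<Rightarrow> ('g \<Rightarrow> real) \<Rightarrow> bool" where
  "lcs_first_kind br \<omega> \<theta> \<longleftrightarrow> \<theta> ` g_omega br \<omega> = UNIV"

definition lcs_second_kind :: "('g \<Rightarrow> 'g \<Rightarrow> 'g) \<Rightarrow> ('g \<Rightarrow> 'g \<Rightarrow> real) \<Rightarrow> ('g \<Rightarrow> real) \<Rightarrow> bool" where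
  "lcs_second_kind br \<omega> \<theta> \<longleftrightarrow> (\<forall>x \<in> g_omega br \<omega>. \<theta> x = 0)"

end

theory Submission
  imports Defs
begin

text \<open>Since \<open>M\<close> is onto, the ideal \<open>u\<close> is the derived algebra, so \<open>\<theta>\<close> vanishes on it and any
  \<open>x \<in> g\<^sub>\<omega>\<close> with \<open>\<theta>(x) \<noteq> 0\<close> has a nonzero \<open>f\<^sub>1\<close>-component. For such an \<open>x\<close> the identity
  \<open>d\<omega> = \<theta> \<and> \<omega>\<close> collapses to \<open>\<omega>(x,[y,z]) = \<theta>(x) \<omega>(y,z)\<close> on \<open>u\<close>, so the abelian ideal \<open>u\<close> is
  isotropic, while \<open>\<omega>(x,[x,y]) = 0\<close> and \<open>ad\<^sub>x(u) = u\<close> make \<open>u\<close> orthogonal to \<open>x\<close>. As \<open>x\<close> and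
  \<open>u\<close> span \<open>g\<close>, the nonzero ideal \<open>u\<close> lies in the kernel of \<open>\<omega>\<close>, contradicting non-degeneracy.\<close>

lemma bilinear_alternating_antisym:
  assumes "bilinear \<omega>" and "\<And>x. \<omega> x x = 0"
  shows "\<omega> x y = - \<omega> y x"
proof -
  have "\<omega> (x + y) (x + y) = \<omega> x x + \<omega> x y + \<omega> y x + \<omega> y y"
    using assms(1) by (simp add: bilinear_ladd bilinear_radd)
  then show ?thesis using assms(2) by (simp add: eq_neg_iff_add_eq_0)
qed

lemma lcs_g_omega_differential:
  assumes lcs: "lcs_structure br \<omega> \<theta>"
    and br_antisym: "\<And>x y. br y x = - br x y"
    and x: "x \<in> g_omega br \<omega>"
  shows "\<omega> x (br y z) = \<theta> x * \<omega> y z + \<theta> y * \<omega> z x + \<theta> z * \<omega> x y"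
proof -
  have bil: "bilinear \<omega>" and alt: "\<And>x. \<omega> x x = 0"
    using lcs unfolding lcs_structure_def by blast+
  have "\<omega> (br x y) z + \<omega> y (br x z) = 0"
    using x unfolding g_omega_def by blast
  moreover have "\<omega> (br z x) y = \<omega> y (br x z)"
  proof -
    have "\<omega> (br z x) y = - \<omega> (br x z) y"
      using bil by (simp add: br_antisym[of z x] bilinear_lneg)
    then show ?thesis using bilinear_alternating_antisym[OF bil alt, of "br x z" y] by simp
  qed
  moreover have "\<omega> (br y z) x = - \<omega> x (br y z)"
    using bilinear_alternating_antisym[OF bil alt] .
  moreover have "- \<omega> (br x y) z - \<omega> (br y z) x - \<omega> (br z x) y
                   = \<theta> x * \<omega> y z + \<theta> y * \<omega> z x + \<theta> z * \<omega> x y"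
    using lcs unfolding lcs_structure_def by blast
  ultimately show ?thesis by linarith
qed

lemma g_omega_orthogonal_ad:
  fixes br :: "'g::real_vector \<Rightarrow> 'g \<Rightarrow> 'g"
  assumes "bilinear \<omega>"
    and br_antisym: "\<And>x y. br y x = - br x y"
    and x: "x \<in> g_omega br \<omega>"
  shows "\<omega> x (br x y) = 0"
proof -
  have "br x x = 0" using br_antisym[of x x] by (simp add: eq_neg_iff_add_eq_0 flip: scaleR_2)
  moreover have "\<omega> (br x x) y + \<omega> x (br x y) = 0"
    using x unfolding g_omega_def by blast
  ultimately show ?thesis using assms(1) by (simp add: bilinear_lzero)
qed

lemma aa_bracket_antisym: "aa_bracket M q p = - aa_bracket M p q"
  by (simp add: aa_bracket_def)

lemma aa_bracket_ideal: "aa_bracket M (a, v) (0, u) = (0, a *\<^sub>R M u)"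
  by (simp add: aa_bracket_def)

lemma aa_closed_form_multiple_fst:
  assumes "surj M" and "linear \<theta>" and closed: "\<And>x y. \<theta> (aa_bracket M x y) = 0"
  shows "\<theta> (a, v) = a * \<theta> (1, 0)"
proof -
  obtain u where "M u = v" using assms(1) by (metis surjD)
  then have "\<theta> (0, v) = 0"
    using closed[of "(1, 0)" "(0, u)"] by (simp add: aa_bracket_ideal)
  moreover have "(a, v) = a *\<^sub>R (1, 0) + (0, v)" by simp
  then have "\<theta> (a, v) = \<theta> (a *\<^sub>R (1, 0)) + \<theta> (0, v)"
    using assms(2) by (metis linear_add)
  moreover have "\<theta> (a *\<^sub>R (1, 0)) = a * \<theta> (1, 0)"
    using assms(2) by (metis linear_scale real_scaleR_def)
  ultimately show ?thesis by simp
qed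

lemma aa_ideal_in_radical:
  fixes \<omega> :: "real \<times> 'u::real_vector \<Rightarrow> real \<times> 'u \<Rightarrow> real"
  assumes bil: "bilinear \<omega>" and alt: "\<And>x. \<omega> x x = 0" and "a \<noteq> 0"
    and isotropic: "\<And>u1 u2. \<omega> (0, u1) (0, u2) = 0"
    and orthogonal: "\<And>w. \<omega> (a, v) (0, w) = 0"
  shows "\<omega> (0, e) y = 0"
proof -
  obtain b u where ye: "y = (b, u)" by fastforce
  have "y = (b / a) *\<^sub>R (a, v) + (0, u - (b / a) *\<^sub>R v)" using \<open>a \<noteq> 0\<close> by (simp add: ye)
  then have "\<omega> (0, e) y = (b / a) * \<omega> (0, e) (a, v) + \<omega> (0, e) (0, u - (b / a) *\<^sub>R v)"
    using bil by (simp only: bilinear_radd bilinear_rmul real_scaleR_def)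
  also have "\<dots> = 0"
    using isotropic orthogonal[of e] bilinear_alternating_antisym[OF bil alt, of "(0, e)" "(a, v)"]
    by (simp only: minus_zero mult_zero_right add_0)
  finally show ?thesis .
qed

lemma aa_g_omega_theta_zero:
  fixes M :: "'u::real_vector \<Rightarrow> 'u"
  assumes lcs: "lcs_structure (aa_bracket M) \<omega> \<theta>"
    and "surj M" and nontrivial: "(e::'u) \<noteq> 0"
    and x: "x \<in> g_omega (aa_bracket M) \<omega>"
  shows "\<theta> x = 0"
proof (rule ccontr)
  assume tx: "\<theta> x \<noteq> 0"
  have bil: "bilinear \<omega>" and alt: "\<And>x. \<omega> x x = 0"
    and nondeg: "\<And>x. (\<forall>y. \<omega> x y = 0) \<Longrightarrow> x = 0"
    using lcs unfolding lcs_structure_def by blast+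
  have tf: "\<And>a v. \<theta> (a, v) = a * \<theta> (1, 0)"
    using lcs \<open>surj M\<close> by (intro aa_closed_form_multiple_fst) (auto simp: lcs_structure_def)
  obtain a v where xe: "x = (a, v)" by fastforce
  with tx tf[of a v] have "a \<noteq> 0" by auto
  have isotropic: "\<omega> (0, u1) (0, u2) = 0" for u1 u2
  proof -
    have "\<omega> x (aa_bracket M (0, u1) (0, u2)) = \<theta> x * \<omega> (0, u1) (0, u2)"
      using lcs_g_omega_differential[OF lcs aa_bracket_antisym x] tf[of 0] by simp
    then show ?thesis
      using tx bil by (simp add: aa_bracket_ideal bilinear_rzero flip: zero_prod_def)
  qed
  have orthogonal: "\<omega> x (0, w) = 0" for w
  proof -
    obtain u where "M u = w /\<^sub>R a" using \<open>surj M\<close> by (metis surjD)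
    then have "aa_bracket M x (0, u) = (0, w)" using \<open>a \<noteq> 0\<close> by (simp add: xe aa_bracket_ideal)
    then show ?thesis using g_omega_orthogonal_ad[OF bil aa_bracket_antisym x] by metis
  qed
  have "\<forall>y. \<omega> (0, e) y = 0"
    using aa_ideal_in_radical[OF bil alt \<open>a \<noteq> 0\<close> isotropic] orthogonal xe by blast
  then have "(0::real, e) = 0" by (rule nondeg)
  then have "e = 0" by (metis snd_conv snd_zero)
  with nontrivial show False by contradiction
qed

theorem lemma4p7:
  fixes M :: "'u::euclidean_space \<Rightarrow> 'u"
    and \<omega> :: "real \<times> 'u \<Rightarrow> real \<times> 'u \<Rightarrow> real"
    and \<theta> :: "real \<times> 'u \<Rightarrow> real"
  assumes "linear M"
    and "lcs_structure (aa_bracket M) \<omega> \<theta>"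
    and "bij M"
  shows "lcs_second_kind (aa_bracket M) \<omega> \<theta>"
proof -
  obtain e :: 'u where "e \<in> Basis" using nonempty_Basis by blast
  then have "e \<noteq> 0" by auto
  then show ?thesis
    using aa_g_omega_theta_zero[OF assms(2) bij_is_surj[OF assms(3)]]
    unfolding lcs_second_kind_def by blast
qed

end
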